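(* Let $M$ be a connected two-dimensional manifold and $f:M\to\mathbb{R}^{0,2,1}$ a non-degenerate immersion. Suppose there is $\lambda\in C^\infty(M)$ with $h=\lambda g$, and suppose $f$ is not $d$-totally geodesic, i.e. $h\not\equiv0$. Then $\lambda$ is a nonzero constant. Moreover, there are constants $A,B,C\in\mathbb{R}$ such that $f(M)$ is an open subset of the paraboloid of revolution $$\left\{\left(u,v,\tfrac{\lambda}{2}(u^2+v^2)+Au+Bv+C\right)\ :\ (u,v)\in\mathbb{R}^2\right\}.$$ In particular, up to an affine isometry of $\mathbb{R}^{0,2,1}$, $f(M)$ is an open subset of $\{(u,v,u^2+v^2):(u,v)\in\mathbb{R}^2\}$.
   Context: $\mathbb{R}^{0,2,1}$ denotes $\mathbb{R}^3$ with coordinates $(x,y,z)$ and the degenerate form $(\cdot,\cdot)=dx^2+dy^2$. A non-degenerate immersion is a $C^\infty$ immersion $f:M\to\mathbb{R}^{0,2,1}$ of a 2-manifold whose induced metric $g=f^*(\cdot,\cdot)$ is positive definite. Let $\xi=(0,0,1)$ and let $d$ be the standard flat connection of $\mathbb{R}^3$ (componentwise differentiation). Since $\mathbb{R}^3=df(T_pM)\oplus\mathbb{R}\xi$, one can decompose $d_X(df(Y))=df(\nabla_XY)+h(X,Y)\xi$, where $\nabla$ is the Levi-Civita connection of $g$ and $h$ is a symmetric $(0,2)$-tensor called the second fundamental form. $f$ is $d$-totally geodesic if $h\equiv0$. An affine isometry of $\mathbb{R}^{0,2,1}$ is a map $p\mapsto Pp+b$ with $b\in\mathbb{R}^3$ and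 $P=\begin{pmatrix}T&0\\ (a\ \ b')&c\end{pmatrix}$, where $T\in O(2)$, $a,b',c\in\mathbb{R}$ and $c\neq0$. *)

theory Defs
  imports "HOL-Analysis.Analysis"
begin

fun Ck :: "nat \<Rightarrow> (real \<times> real) set \<Rightarrow> (real \<times> real \<Rightarrow> 'b::real_normed_vector) \<Rightarrow> bool" where
  "Ck 0 U F = continuous_on U F"
| "Ck (Suc n) U F = (F differentiable_on U \<and> (\<forall>v. Ck n U (\<lambda>x. frechet_derivative F (at x) v)))"

definition smooth_on_R2 :: "(real \<times> real) set \<Rightarrow> (real \<times> real \<Rightarrow> 'b::real_normed_vector) \<Rightarrow> bool" where
  "smooth_on_R2 U F \<longleftrightarrow> (\<forall>n. Ck n U F)"

definition is_chart :: "('m::topological_space set \<times> ('m \<Rightarrow> real \<times> real)) \<Rightarrow> bool" where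
  "is_chart c \<longleftrightarrow> (let U = fst c; \<phi> = snd c in
     open U \<and> open (\<phi> ` U) \<and> inj_on \<phi> U \<and> continuous_on U \<phi> \<and>
     continuous_on (\<phi> ` U) (inv_into U \<phi>))"

text \<open>A smooth atlas on the whole space (M = UNIV of type 'm).\<close>
definition smooth_atlas :: "('m::topological_space set \<times> ('m \<Rightarrow> real \<times> real)) set \<Rightarrow> bool" where
  "smooth_atlas \<A> \<longleftrightarrow>
     (\<forall>c\<in>\<A>. is_chart c) \<and> (\<Union>c\<in>\<A>. fst c) = UNIV \<and>
     (\<forall>c\<in>\<A>. \<forall>d\<in>\<A>.
        smooth_on_R2 (snd c ` (fst c \<inter> fst d)) (snd d \<circ> inv_into (fst c) (snd c)))"

definition smooth_map :: "('m::topological_space set \<times> ('m \<Rightarrow> real \<times> real)) set \<Rightarrow> ('m \<Rightarrow> 'b::real_normed_vector) \<Rightarrow> bool" where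
  "smooth_map \<A> F \<longleftrightarrow> (\<forall>c\<in>\<A>. smooth_on_R2 (snd c ` fst c) (F \<circ> inv_into (fst c) (snd c)))"

section \<open>The degenerate space R^{0,2,1} = real x real x real\<close>

definition dform :: "real \<times> real \<times> real \<Rightarrow> real \<times> real \<times> real \<Rightarrow> real" where
  "dform p q = fst p * fst q + fst (snd p) * fst (snd q)"

definition xi :: "real \<times> real \<times> real" where
  "xi = (0, 0, 1)"

definition loc :: "('m set \<times> ('m \<Rightarrow> real \<times> real)) \<Rightarrow> ('m \<Rightarrow> 'b) \<Rightarrow> real \<times> real \<Rightarrow> 'b" where
  "loc c f = f \<circ> inv_into (fst c) (snd c)"

definition D1 :: "(real \<times> real \<Rightarrow> 'b::real_normed_vector) \<Rightarrow> real \<times> real \<Rightarrow> real \<times> real \<Rightarrow> 'b" where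
  "D1 G x v = frechet_derivative G (at x) v"

definition D2 :: "(real \<times> real \<Rightarrow> 'b::real_normed_vector) \<Rightarrow> real \<times> real \<Rightarrow> real \<times> real \<Rightarrow> real \<times> real \<Rightarrow> 'b" where
  "D2 G x v w = frechet_derivative (\<lambda>y. D1 G y w) (at x) v"

definition immersion :: "('m::topological_space set \<times> ('m \<Rightarrow> real \<times> real)) set \<Rightarrow> ('m \<Rightarrow> real \<times> real \<times> real) \<Rightarrow> bool" where
  "immersion \<A> f \<longleftrightarrow> smooth_map \<A> f \<and>
     (\<forall>c\<in>\<A>. \<forall>x\<in>snd c ` fst c. inj (D1 (loc c f) x))"

text \<open>Induced metric g = f^*(.,.) in chart c at the point with coordinates x, applied to
  coordinate tangent vectors v, w.\<close>
definition ind_metric :: "('m set \<times> ('m \<Rightarrow> real \<times> real)) \<Rightarrow> ('m \<Rightarrow> real \<times> real \<times> real) \<Rightarrow> real \<times> real \<Rightarrow> real \<times> real \<Rightarrow> real \<times> real \<Rightarrow> real" where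
  "ind_metric c f x v w = dform (D1 (loc c f) x v) (D1 (loc c f) x w)"

definition nondeg_immersion :: "('m::topological_space set \<times> ('m \<Rightarrow> real \<times> real)) set \<Rightarrow> ('m \<Rightarrow> real \<times> real \<times> real) \<Rightarrow> bool" where
  "nondeg_immersion \<A> f \<longleftrightarrow> immersion \<A> f \<and>
     (\<forall>c\<in>\<A>. \<forall>x\<in>snd c ` fst c. \<forall>v. v \<noteq> 0 \<longrightarrow> ind_metric c f x v v > 0)"

text \<open>Second fundamental form: the xi-component of d_X df(Y) in the decomposition
  R^3 = df(T_pM) + R xi (in chart coordinates).\<close>
definition sff :: "('m set \<times> ('m \<Rightarrow> real \<times> real)) \<Rightarrow> ('m \<Rightarrow> real \<times> real \<times> real) \<Rightarrow> real \<times> real \<Rightarrow> real \<times> real \<Rightarrow> real \<times> real \<Rightarrow> real" where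
  "sff c f x v w = (THE t. D2 (loc c f) x v w - t *\<^sub>R xi \<in> range (D1 (loc c f) x))"

definition affine_isometry :: "(real \<times> real \<times> real \<Rightarrow> real \<times> real \<times> real) \<Rightarrow> bool" where
  "affine_isometry \<Phi> \<longleftrightarrow> (\<exists>t11 t12 t21 t22 a b' c b1 b2 b3 :: real.
     t11\<^sup>2 + t21\<^sup>2 = 1 \<and> t12\<^sup>2 + t22\<^sup>2 = 1 \<and> t11 * t12 + t21 * t22 = 0 \<and> c \<noteq> 0 \<and>
     \<Phi> = (\<lambda>(x, y, z). (t11 * x + t12 * y + b1, t21 * x + t22 * y + b2, a * x + b' * y + c * z + b3)))"

end

theory Submission
  imports Defs
begin

(* In a chart write f = (X, Y, Z). Positivity of the induced metric says that d(X, Y) is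
   invertible, so f(M) is locally a graph z = phi(x, y), and dZ = s . d(X, Y) with s = grad phi.
   The second fundamental form becomes h(v, w) = ds(v) . d(X, Y)(w), so h = lam g forces
   ds = lam d(X, Y). Comparing mixed second derivatives of s gives d lam = 0; on connected M,
   lam is a constant k, nonzero because h does not vanish identically. Then s - k (X, Y) is a
   locally constant (A, B), and so is Z - k/2 (X^2 + Y^2) - A X - B Y. These coefficients are
   determined by any open piece of f(M), hence they are global by connectedness. As (X, Y) is
   an open map, f(M) is open in the paraboloid, and completing the square maps it into
   z = x^2 + y^2. *)

section \<open>Symmetry of second derivatives\<close>

lemma has_real_derivative_along_line:
  fixes g :: "'a::real_normed_vector \<Rightarrow> real"
  assumes "(g has_derivative G) (at (a + t *\<^sub>R u))"
  shows "((\<lambda>s. g (a + s *\<^sub>R u)) has_real_derivative G u) (at t)"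
proof -
  have "((\<lambda>s. a + s *\<^sub>R u) has_derivative (\<lambda>s. s *\<^sub>R u)) (at t)"
    by (auto intro!: derivative_eq_intros)
  from has_derivative_compose[OF this assms]
  have "((\<lambda>s. g (a + s *\<^sub>R u)) has_derivative (\<lambda>s. G u * s)) (at t)"
    using linear_scale[OF bounded_linear.linear[OF has_derivative_bounded_linear[OF assms]]]
    by (simp add: o_def mult.commute)
  then show ?thesis
    by (simp add: has_field_derivative_def)
qed

lemma second_difference_mean_value:
  fixes g :: "'a::real_normed_vector \<Rightarrow> real"
  assumes dg: "\<And>x. x \<in> V \<Longrightarrow> (g has_derivative G x) (at x)"
    and dG: "\<And>x w. x \<in> V \<Longrightarrow> ((\<lambda>y. G y w) has_derivative (\<lambda>v. H x v w)) (at x)"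
    and s: "s > 0"
    and box: "\<And>\<sigma> \<tau>. 0 \<le> \<sigma> \<Longrightarrow> \<sigma> \<le> s \<Longrightarrow> 0 \<le> \<tau> \<Longrightarrow> \<tau> \<le> s \<Longrightarrow> a + \<sigma> *\<^sub>R u + \<tau> *\<^sub>R w \<in> V"
  obtains \<sigma> \<tau> where "0 < \<sigma>" "\<sigma> < s" "0 < \<tau>" "\<tau> < s"
    "g (a + s *\<^sub>R u + s *\<^sub>R w) - g (a + s *\<^sub>R u) - g (a + s *\<^sub>R w) + g a
       = s * s * H (a + \<sigma> *\<^sub>R u + \<tau> *\<^sub>R w) w u"
proof -
  define \<phi> where "\<phi> \<sigma> = g (a + \<sigma> *\<^sub>R u + s *\<^sub>R w) - g (a + \<sigma> *\<^sub>R u)" for \<sigma>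
  have "(\<phi> has_real_derivative G (a + \<sigma> *\<^sub>R u + s *\<^sub>R w) u - G (a + \<sigma> *\<^sub>R u) u) (at \<sigma>)"
    if "0 \<le> \<sigma>" "\<sigma> \<le> s" for \<sigma>
  proof -
    have "((\<lambda>t. g ((a + s *\<^sub>R w) + t *\<^sub>R u)) has_real_derivative
        G (a + \<sigma> *\<^sub>R u + s *\<^sub>R w) u) (at \<sigma>)"
      by (rule has_real_derivative_along_line)
         (use dg box[of \<sigma> s] that s in \<open>auto simp: algebra_simps\<close>)
    moreover have "((\<lambda>t. g (a + t *\<^sub>R u)) has_real_derivative G (a + \<sigma> *\<^sub>R u) u) (at \<sigma>)"
      by (rule has_real_derivative_along_line) (use dg box[of \<sigma> 0] that s in auto)
    ultimately show ?thesis
      unfolding \<phi>_def by (auto intro: DERIV_diff simp: algebra_simps)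
  qed
  from MVT2[OF s this] obtain \<sigma> where \<sigma>: "0 < \<sigma>" "\<sigma> < s"
    "\<phi> s - \<phi> 0 = s * (G (a + \<sigma> *\<^sub>R u + s *\<^sub>R w) u - G (a + \<sigma> *\<^sub>R u) u)" by auto
  define \<psi> where "\<psi> \<tau> = G (a + \<sigma> *\<^sub>R u + \<tau> *\<^sub>R w) u" for \<tau>
  have "(\<psi> has_real_derivative H (a + \<sigma> *\<^sub>R u + \<tau> *\<^sub>R w) w u) (at \<tau>)"
    if "0 \<le> \<tau>" "\<tau> \<le> s" for \<tau>
    unfolding \<psi>_def
    by (rule has_real_derivative_along_line[of "\<lambda>y. G y u"]) (use dG box \<sigma> that in auto)
  from MVT2[OF s this] obtain \<tau> where "0 < \<tau>" "\<tau> < s"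
    "\<psi> s - \<psi> 0 = s * H (a + \<sigma> *\<^sub>R u + \<tau> *\<^sub>R w) w u" by auto
  with \<sigma> show ?thesis
    by (intro that[of \<sigma> \<tau>]) (auto simp: \<phi>_def \<psi>_def algebra_simps)
qed

lemma mixed_derivatives_agree_nearby:
  fixes g :: "'a::real_normed_vector \<Rightarrow> real"
  assumes dg: "\<And>x. x \<in> V \<Longrightarrow> (g has_derivative G x) (at x)"
    and dG: "\<And>x w. x \<in> V \<Longrightarrow> ((\<lambda>y. G y w) has_derivative (\<lambda>v. H x v w)) (at x)"
    and \<rho>: "\<rho> > 0" "ball a \<rho> \<subseteq> V"
  obtains p q where "dist p a < \<rho>" "dist q a < \<rho>" "H p w u = H q u w"
proof -
  define s where "s = \<rho> / (norm u + norm w + 1)"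
  have "norm u + norm w + 1 > 0" by (simp add: add_nonneg_pos)
  then have s: "s > 0" and s_\<rho>: "s * (norm u + norm w + 1) = \<rho>"
    using \<rho>(1) by (simp_all add: s_def)
  have near: "dist (a + \<sigma> *\<^sub>R u + \<tau> *\<^sub>R w) a < \<rho>"
    if "0 \<le> \<sigma>" "\<sigma> \<le> s" "0 \<le> \<tau>" "\<tau> \<le> s" for \<sigma> \<tau>
  proof -
    have "dist (a + \<sigma> *\<^sub>R u + \<tau> *\<^sub>R w) a \<le> \<sigma> * norm u + \<tau> * norm w"
      using norm_triangle_ineq[of "\<sigma> *\<^sub>R u" "\<tau> *\<^sub>R w"] that by (simp add: dist_norm)
    also have "\<dots> \<le> s * norm u + s * norm w"
      by (intro add_mono mult_right_mono) (use that in auto)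
    also have "\<dots> < s * (norm u + norm w + 1)" using s by (simp add: algebra_simps)
    finally show ?thesis using s_\<rho> by simp
  qed
  have near': "dist (a + \<sigma> *\<^sub>R w + \<tau> *\<^sub>R u) a < \<rho>"
    if "0 \<le> \<sigma>" "\<sigma> \<le> s" "0 \<le> \<tau>" "\<tau> \<le> s" for \<sigma> \<tau>
    using near[of \<tau> \<sigma>] that by (simp add: add_ac)
  have in_V: "x \<in> V" if "dist x a < \<rho>" for x
    using \<rho>(2) that by (auto simp: dist_commute)
  obtain \<sigma>1 \<tau>1 where 1: "0 < \<sigma>1" "\<sigma>1 < s" "0 < \<tau>1" "\<tau>1 < s"
     "g (a + s *\<^sub>R u + s *\<^sub>R w) - g (a + s *\<^sub>R u) - g (a + s *\<^sub>R w) + g a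
       = s * s * H (a + \<sigma>1 *\<^sub>R u + \<tau>1 *\<^sub>R w) w u"
    by (rule second_difference_mean_value[OF dg dG s]) (use in_V near in auto)
  obtain \<sigma>2 \<tau>2 where 2: "0 < \<sigma>2" "\<sigma>2 < s" "0 < \<tau>2" "\<tau>2 < s"
     "g (a + s *\<^sub>R w + s *\<^sub>R u) - g (a + s *\<^sub>R w) - g (a + s *\<^sub>R u) + g a
       = s * s * H (a + \<sigma>2 *\<^sub>R w + \<tau>2 *\<^sub>R u) u w"
    by (rule second_difference_mean_value[OF dg dG s]) (use in_V near' in auto)
  have "H (a + \<sigma>1 *\<^sub>R u + \<tau>1 *\<^sub>R w) w u = H (a + \<sigma>2 *\<^sub>R w + \<tau>2 *\<^sub>R u) u w"
    using 1(5) 2(5) s by (simp add: algebra_simps)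
  with 1 2 near near' show thesis by (intro that) auto
qed

lemma second_derivative_symmetric_real:
  fixes g :: "'a::real_normed_vector \<Rightarrow> real"
  assumes V: "open V" and a: "a \<in> V"
    and dg: "\<And>x. x \<in> V \<Longrightarrow> (g has_derivative G x) (at x)"
    and dG: "\<And>x w. x \<in> V \<Longrightarrow> ((\<lambda>y. G y w) has_derivative (\<lambda>v. H x v w)) (at x)"
    and cont: "\<And>v w. continuous (at a) (\<lambda>x. H x v w)"
  shows "H a u w = H a w u"
proof (rule ccontr)
  define e where "e = \<bar>H a u w - H a w u\<bar> / 2"
  assume "H a u w \<noteq> H a w u"
  then have e: "e > 0" by (simp add: e_def)
  obtain r where r: "r > 0" "ball a r \<subseteq> V" using V a openE by blast
  obtain \<delta>1 where \<delta>1: "\<delta>1 > 0" "\<forall>x. dist x a < \<delta>1 \<longrightarrow> dist (H x w u) (H a w u) < e"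
    using cont[of w u, unfolded continuous_at_eps_delta] e by blast
  obtain \<delta>2 where \<delta>2: "\<delta>2 > 0" "\<forall>x. dist x a < \<delta>2 \<longrightarrow> dist (H x u w) (H a u w) < e"
    using cont[of u w, unfolded continuous_at_eps_delta] e by blast
  obtain p q where pq: "dist p a < min r (min \<delta>1 \<delta>2)" "dist q a < min r (min \<delta>1 \<delta>2)"
    and eq: "H p w u = H q u w"
    by (rule mixed_derivatives_agree_nearby[OF dg dG, where \<rho> = "min r (min \<delta>1 \<delta>2)"])
       (use r \<delta>1 \<delta>2 in auto)
  have "\<bar>H p w u - H a w u\<bar> < e" "\<bar>H q u w - H a u w\<bar> < e"
    using \<delta>1(2) \<delta>2(2) pq by (simp_all add: dist_real_def)
  with eq show False by (simp add: e_def abs_less_iff abs_if split: if_splits)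
qed

lemma second_derivative_symmetric:
  fixes g :: "'a::real_normed_vector \<Rightarrow> 'b::euclidean_space"
  assumes V: "open V" and a: "a \<in> V"
    and dg: "\<And>x. x \<in> V \<Longrightarrow> (g has_derivative G x) (at x)"
    and dG: "\<And>x w. x \<in> V \<Longrightarrow> ((\<lambda>y. G y w) has_derivative (\<lambda>v. H x v w)) (at x)"
    and cont: "\<And>v w. continuous (at a) (\<lambda>x. H x v w)"
  shows "H a u w = H a w u"
proof (rule euclidean_eqI)
  fix b :: 'b
  show "H a u w \<bullet> b = H a w u \<bullet> b"
    by (rule second_derivative_symmetric_real[OF V a, where g="\<lambda>x. g x \<bullet> b"
          and G="\<lambda>x v. G x v \<bullet> b" and H="\<lambda>x v w. H x v w \<bullet> b"])
       (use dg dG cont in \<open>auto intro: has_derivative_inner_left continuous_intros\<close>)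
qed

lemma smooth_on_R2_D1: "smooth_on_R2 U F \<Longrightarrow> smooth_on_R2 U (\<lambda>x. D1 F x v)"
  unfolding smooth_on_R2_def D1_def
proof
  fix n assume "\<forall>n. Ck n U F"
  then have "Ck (Suc n) U F" by blast
  then show "Ck n U (\<lambda>x. frechet_derivative F (at x) v)" by (cases v) simp
qed

lemma smooth_on_R2_has_derivative:
  assumes "smooth_on_R2 U F" "open U" "x \<in> U"
  shows "(F has_derivative D1 F x) (at x)"
proof -
  have "Ck (Suc 0) U F" using assms(1) unfolding smooth_on_R2_def by blast
  then have "F differentiable (at x)"
    using assms(2,3) by (simp add: differentiable_on_eq_differentiable_at)
  then show ?thesis
    unfolding D1_def by (simp add: frechet_derivative_works[symmetric] eta_contract_eq)
qed

lemma smooth_on_R2_continuous: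
  assumes "smooth_on_R2 U F" "open U" "x \<in> U"
  shows "isCont F x"
proof -
  have "Ck 0 U F" using assms(1) unfolding smooth_on_R2_def by blast
  then show ?thesis using assms(2,3) continuous_on_eq_continuous_at by auto
qed

lemma smooth_on_R2_has_derivative_D1:
  assumes "smooth_on_R2 U F" "open U" "x \<in> U"
  shows "((\<lambda>y. D1 F y w) has_derivative (\<lambda>v. D2 F x v w)) (at x)"
  using smooth_on_R2_has_derivative[OF smooth_on_R2_D1[OF assms(1)] assms(2,3)]
  unfolding D2_def D1_def by simp

lemma smooth_on_R2_D2_symmetric:
  fixes F :: "real \<times> real \<Rightarrow> 'b::euclidean_space"
  assumes "smooth_on_R2 U F" "open U" "x \<in> U"
  shows "D2 F x u w = D2 F x w u"
proof (rule second_derivative_symmetric[OF assms(2,3)])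
  show "\<And>y. y \<in> U \<Longrightarrow> (F has_derivative D1 F y) (at y)"
    using smooth_on_R2_has_derivative[OF assms(1,2)] .
  show "\<And>y w. y \<in> U \<Longrightarrow> ((\<lambda>y. D1 F y w) has_derivative (\<lambda>v. D2 F y v w)) (at y)"
    using smooth_on_R2_has_derivative_D1[OF assms(1,2)] .
  show "\<And>v w. isCont (\<lambda>y. D2 F y v w) x"
    using smooth_on_R2_continuous[OF smooth_on_R2_D1[OF smooth_on_R2_D1[OF assms(1)]] assms(2,3)]
    unfolding D2_def D1_def by simp
qed

lemma linear_pair_expand:
  fixes T :: "real \<times> real \<Rightarrow> 'b::real_vector"
  assumes "linear T"
  shows "T (v1, v2) = v1 *\<^sub>R T (1, 0) + v2 *\<^sub>R T (0, 1)"
proof -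
  have "(v1, v2) = v1 *\<^sub>R (1, 0) + v2 *\<^sub>R (0::real, 1::real)" by simp
  then show ?thesis
    by (simp only: linear_add[OF assms] linear_scale[OF assms])
qed

definition det2 :: "real \<times> real \<Rightarrow> real \<times> real \<Rightarrow> real" where
  "det2 a b = fst a * snd b - fst b * snd a"

text \<open>Cramer's rule: the solution \<open>c\<close> of \<open>c \<bullet> a = za\<close>, \<open>c \<bullet> b = zb\<close>.\<close>
definition cramer2 :: "real \<times> real \<Rightarrow> real \<times> real \<Rightarrow> real \<Rightarrow> real \<Rightarrow> real \<times> real" where
  "cramer2 a b za zb = ((za * snd b - zb * snd a) / det2 a b, (fst a * zb - fst b * za) / det2 a b)"

lemma cramer2_inner:
  assumes "det2 a b \<noteq> 0"
  shows "cramer2 a b za zb \<bullet> a = za" "cramer2 a b za zb \<bullet> b = zb"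
proof -
  obtain a1 a2 b1 b2 where ab: "a = (a1, a2)" "b = (b1, b2)" by fastforce
  define d where "d = a1 * b2 - b1 * a2"
  have d: "d \<noteq> 0" using assms ab by (simp add: det2_def d_def)
  have "cramer2 a b za zb \<bullet> a = ((za * b2 - zb * a2) * a1 + (a1 * zb - b1 * za) * a2) / d"
    by (simp add: ab cramer2_def det2_def d_def add_divide_distrib)
  also have "\<dots> = za * d / d" by (simp add: d_def algebra_simps)
  finally show "cramer2 a b za zb \<bullet> a = za" using d by simp
  have "cramer2 a b za zb \<bullet> b = ((za * b2 - zb * a2) * b1 + (a1 * zb - b1 * za) * b2) / d"
    by (simp add: ab cramer2_def det2_def d_def add_divide_distrib)
  also have "\<dots> = zb * d / d" by (simp add: d_def algebra_simps)
  finally show "cramer2 a b za zb \<bullet> b = zb" using d by simp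
qed

lemma det2_nonzero_if_inj:
  fixes T :: "real \<times> real \<Rightarrow> real \<times> real"
  assumes T: "linear T" "inj T"
  shows "det2 (T (1, 0)) (T (0, 1)) \<noteq> 0"
proof
  assume det: "det2 (T (1, 0)) (T (0, 1)) = 0"
  let ?a = "T (1, 0)" and ?b = "T (0, 1)"
  have "T (snd ?b, - snd ?a) = 0" "T (fst ?b, - fst ?a) = 0"
    using det
    unfolding linear_pair_expand[OF T(1), of "snd ?b"] linear_pair_expand[OF T(1), of "fst ?b"]
    by (auto simp: det2_def algebra_simps prod_eq_iff)
  then have "(snd ?b, - snd ?a) = 0" "(fst ?b, - fst ?a) = 0"
    using T by (simp_all add: linear_inj_iff_eq_0)
  then have "T (1, 0) = 0" by (simp add: prod_eq_iff)
  then have "(1::real, 0::real) = 0"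
    using T by (metis linear_inj_iff_eq_0)
  then show False by (simp add: zero_prod_def)
qed

section \<open>Paraboloids\<close>

definition xy_proj :: "real \<times> real \<times> real \<Rightarrow> real \<times> real" where
  "xy_proj p = (fst p, fst (snd p))"

definition height :: "real \<times> real \<times> real \<Rightarrow> real" where
  "height p = snd (snd p)"

lemma bounded_linear_xy_proj: "bounded_linear xy_proj"
  unfolding xy_proj_def
  by (intro bounded_linear_Pair bounded_linear_fst
      bounded_linear_compose[OF bounded_linear_fst bounded_linear_snd])

lemma bounded_linear_height: "bounded_linear height"
  unfolding height_def by (rule bounded_linear_compose[OF bounded_linear_snd bounded_linear_snd])

lemma dform_eq_inner: "dform p q = xy_proj p \<bullet> xy_proj q"
  by (simp add: dform_def xy_proj_def)

lemma xy_proj_height_eqI: "xy_proj p = xy_proj q \<Longrightarrow> height p = height q \<Longrightarrow> p = q"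
  by (simp add: xy_proj_def height_def prod_eq_iff)

definition paraboloid :: "real \<Rightarrow> real \<Rightarrow> real \<Rightarrow> real \<Rightarrow> (real \<times> real \<times> real) set" where
  "paraboloid k A B C = {(u, v, k / 2 * (u\<^sup>2 + v\<^sup>2) + A * u + B * v + C) | u v. True}"

lemma mem_paraboloid:
  "p \<in> paraboloid k A B C \<longleftrightarrow>
     height p = k / 2 * (xy_proj p \<bullet> xy_proj p) + (A, B) \<bullet> xy_proj p + C"
  by (cases p) (auto simp: paraboloid_def xy_proj_def height_def power2_eq_square)

lemma openin_paraboloid_if_open_xy_proj:
  assumes sub: "S \<subseteq> paraboloid k A B C" and op: "open (xy_proj ` S)"
  shows "openin (top_of_set (paraboloid k A B C)) S"
proof -
  have "S = paraboloid k A B C \<inter> xy_proj -` (xy_proj ` S)"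
  proof
    show "paraboloid k A B C \<inter> xy_proj -` (xy_proj ` S) \<subseteq> S"
    proof
      fix q assume q: "q \<in> paraboloid k A B C \<inter> xy_proj -` (xy_proj ` S)"
      then obtain s where s: "s \<in> S" "xy_proj s = xy_proj q" by auto
      with q sub have "height s = height q" by (auto simp: mem_paraboloid)
      with s show "q \<in> S" using xy_proj_height_eqI by metis
    qed
  qed (use sub in auto)
  moreover have "open (xy_proj -` (xy_proj ` S))"
    by (rule continuous_open_vimage[OF op linear_continuous_at[OF bounded_linear_xy_proj]])
  ultimately show ?thesis unfolding openin_open by blast
qed

lemma paraboloid_normal_form:
  assumes k: "k \<noteq> 0" and sub: "S \<subseteq> paraboloid k A B C" and op: "open (xy_proj ` S)"
  obtains \<Phi> where "affine_isometry \<Phi>" "\<Phi> ` S \<subseteq> paraboloid 2 0 0 0" "open (xy_proj ` \<Phi> ` S)"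
proof
  define b3 where "b3 = (A\<^sup>2 + B\<^sup>2) / k\<^sup>2 - 2 * C / k"
  define \<Phi> :: "real \<times> real \<times> real \<Rightarrow> real \<times> real \<times> real" where
    "\<Phi> = (\<lambda>(x, y, z). (x + A / k, y + B / k, 2 / k * z + b3))"
  show "affine_isometry \<Phi>"
    unfolding affine_isometry_def
    by (rule exI[of _ 1], rule exI[of _ 0], rule exI[of _ 0], rule exI[of _ 1], rule exI[of _ 0],
        rule exI[of _ 0], rule exI[of _ "2 / k"], rule exI[of _ "A / k"], rule exI[of _ "B / k"],
        rule exI[of _ b3]) (simp add: k \<Phi>_def)
  show "\<Phi> ` S \<subseteq> paraboloid 2 0 0 0"
  proof
    fix q assume "q \<in> \<Phi> ` S"
    then obtain u v where q: "q = \<Phi> (u, v, k / 2 * (u\<^sup>2 + v\<^sup>2) + A * u + B * v + C)"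
      using sub unfolding paraboloid_def by blast
    have "2 / k * (k / 2 * (u\<^sup>2 + v\<^sup>2) + A * u + B * v + C) + b3 = (u + A / k)\<^sup>2 + (v + B / k)\<^sup>2"
      using k unfolding b3_def by (simp add: field_simps power2_eq_square)
    then have "q = (u + A / k, v + B / k,
        2 / 2 * ((u + A / k)\<^sup>2 + (v + B / k)\<^sup>2) + 0 * (u + A / k) + 0 * (v + B / k) + 0)"
      by (simp add: q \<Phi>_def)
    then show "q \<in> paraboloid 2 0 0 0"
      unfolding paraboloid_def by blast
  qed
  have "xy_proj ` \<Phi> ` S = (\<lambda>z. (A / k, B / k) + z) ` xy_proj ` S"
    unfolding image_image by (rule image_cong) (auto simp: \<Phi>_def xy_proj_def split: prod.splits)
  then show "open (xy_proj ` \<Phi> ` S)"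
    using open_translation[OF op] by simp
qed

section \<open>Non-degenerate and umbilical patches\<close>

locale nondegenerate_patch =
  fixes V :: "(real \<times> real) set" and F :: "real \<times> real \<Rightarrow> real \<times> real \<times> real"
  assumes open_V: "open V" and smooth_F: "smooth_on_R2 V F"
    and metric_pos: "\<And>x v. x \<in> V \<Longrightarrow> v \<noteq> 0 \<Longrightarrow> dform (D1 F x v) (D1 F x v) > 0"
begin

definition dxy :: "real \<times> real \<Rightarrow> real \<times> real \<Rightarrow> real \<times> real" where
  "dxy x v = xy_proj (D1 F x v)"

lemma has_derivative_F: "x \<in> V \<Longrightarrow> (F has_derivative D1 F x) (at x)"
  using smooth_on_R2_has_derivative[OF smooth_F open_V] .

lemma has_derivative_D1: "x \<in> V \<Longrightarrow> ((\<lambda>y. D1 F y w) has_derivative (\<lambda>v. D2 F x v w)) (at x)"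
  using smooth_on_R2_has_derivative_D1[OF smooth_F open_V] .

lemma D2_symmetric: "x \<in> V \<Longrightarrow> D2 F x u w = D2 F x w u"
  using smooth_on_R2_D2_symmetric[OF smooth_F open_V] .

lemma has_derivative_xy_proj_F: "x \<in> V \<Longrightarrow> ((\<lambda>y. xy_proj (F y)) has_derivative dxy x) (at x)"
  using bounded_linear.has_derivative[OF bounded_linear_xy_proj has_derivative_F]
  by (simp add: dxy_def[abs_def])

lemma has_derivative_height_F:
  "x \<in> V \<Longrightarrow> ((\<lambda>y. height (F y)) has_derivative (\<lambda>v. height (D1 F x v))) (at x)"
  using bounded_linear.has_derivative[OF bounded_linear_height has_derivative_F] .

lemma has_derivative_dxy:
  "x \<in> V \<Longrightarrow> ((\<lambda>y. dxy y w) has_derivative (\<lambda>v. xy_proj (D2 F x v w))) (at x)"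
  unfolding dxy_def
  using bounded_linear.has_derivative[OF bounded_linear_xy_proj has_derivative_D1] .

lemma has_derivative_height_D1:
  "x \<in> V \<Longrightarrow> ((\<lambda>y. height (D1 F y w)) has_derivative (\<lambda>v. height (D2 F x v w))) (at x)"
  using bounded_linear.has_derivative[OF bounded_linear_height has_derivative_D1] .

lemma continuous_D2: "x \<in> V \<Longrightarrow> isCont (\<lambda>y. D2 F y v w) x"
  using smooth_on_R2_continuous[OF smooth_on_R2_D1[OF smooth_on_R2_D1[OF smooth_F]] open_V]
  unfolding D2_def D1_def by simp

lemma linear_D1: "x \<in> V \<Longrightarrow> linear (D1 F x)"
  using has_derivative_F has_derivative_linear by blast

lemma linear_dxy: "x \<in> V \<Longrightarrow> linear (dxy x)"
  using linear_compose[OF linear_D1 bounded_linear.linear[OF bounded_linear_xy_proj]]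
  by (simp add: dxy_def[abs_def] o_def)

lemma inj_dxy:
  assumes x: "x \<in> V"
  shows "inj (dxy x)"
  unfolding linear_inj_iff_eq_0[OF linear_dxy[OF x]]
proof (intro allI impI)
  fix v assume "dxy x v = 0"
  then have "dform (D1 F x v) (D1 F x v) = 0" by (simp add: dform_eq_inner dxy_def)
  then show "v = 0" using metric_pos[OF x, of v] by (cases "v = 0") auto
qed

lemma surj_dxy: "x \<in> V \<Longrightarrow> surj (dxy x)"
  using linear_injective_imp_surjective[OF linear_dxy inj_dxy] by simp

text \<open>Near each point the surface is a graph \<open>z = \<phi>(x, y)\<close>; \<open>slope x\<close> is \<open>\<nabla>\<phi>\<close> at \<open>F x\<close>,
  i.e. the solution of \<open>dz = slope x \<bullet> d(x, y)\<close>.\<close>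
definition slope :: "real \<times> real \<Rightarrow> real \<times> real" where
  "slope x = cramer2 (dxy x (1, 0)) (dxy x (0, 1))
     (height (D1 F x (1, 0))) (height (D1 F x (0, 1)))"

lemma det2_dxy_nonzero: "x \<in> V \<Longrightarrow> det2 (dxy x (1, 0)) (dxy x (0, 1)) \<noteq> 0"
  using det2_nonzero_if_inj[OF linear_dxy inj_dxy] .

lemma height_D1_eq:
  assumes x: "x \<in> V"
  shows "height (D1 F x w) = slope x \<bullet> dxy x w"
proof -
  obtain w1 w2 where w: "w = (w1, w2)" by fastforce
  have "linear (\<lambda>v. height (D1 F x v))"
    using linear_compose[OF linear_D1[OF x] bounded_linear.linear[OF bounded_linear_height]]
    by (simp add: o_def)
  from linear_pair_expand[OF this, of w1 w2]
  have "height (D1 F x w) = w1 * height (D1 F x (1, 0)) + w2 * height (D1 F x (0, 1))"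
    by (simp add: w)
  then show ?thesis
    unfolding w linear_pair_expand[OF linear_dxy[OF x], of w1]
    using cramer2_inner[OF det2_dxy_nonzero[OF x]] by (simp add: inner_add_right slope_def)
qed

lemma differentiable_slope:
  assumes x: "x \<in> V"
  shows "slope differentiable (at x)"
proof -
  have d: "(\<lambda>y. fst (dxy y w)) differentiable (at x)" "(\<lambda>y. snd (dxy y w)) differentiable (at x)"
    "(\<lambda>y. height (D1 F y w)) differentiable (at x)" for w
    using has_derivative_fst[OF has_derivative_dxy[OF x]]
      has_derivative_snd[OF has_derivative_dxy[OF x]] has_derivative_height_D1[OF x] by (blast intro: differentiableI)+
  show ?thesis
    unfolding slope_def[abs_def] cramer2_def det2_def
    using d det2_dxy_nonzero[OF x] unfolding det2_def by (auto intro!: derivative_intros)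
qed

definition Dslope :: "real \<times> real \<Rightarrow> real \<times> real \<Rightarrow> real \<times> real" where
  "Dslope x = frechet_derivative slope (at x)"

lemma has_derivative_slope: "x \<in> V \<Longrightarrow> (slope has_derivative Dslope x) (at x)"
  unfolding Dslope_def using differentiable_slope frechet_derivative_works by blast

lemma height_D2_eq:
  assumes x: "x \<in> V"
  shows "height (D2 F x v w) = Dslope x v \<bullet> dxy x w + slope x \<bullet> xy_proj (D2 F x v w)"
proof -
  have "((\<lambda>y. slope y \<bullet> dxy y w) has_derivative
      (\<lambda>v. slope x \<bullet> xy_proj (D2 F x v w) + Dslope x v \<bullet> dxy x w)) (at x)"
    by (rule has_derivative_inner[OF has_derivative_slope[OF x] has_derivative_dxy[OF x]])
  then have "((\<lambda>y. height (D1 F y w)) has_derivative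
      (\<lambda>v. slope x \<bullet> xy_proj (D2 F x v w) + Dslope x v \<bullet> dxy x w)) (at x)"
    by (rule has_derivative_transform_within_open[OF _ open_V x]) (simp add: height_D1_eq)
  from has_derivative_unique[OF has_derivative_height_D1[OF x] this] show ?thesis
    by (metis add.commute)
qed

lemma xi_component_eq:
  assumes x: "x \<in> V"
  shows "(THE t. p - t *\<^sub>R xi \<in> range (D1 F x)) = height p - slope x \<bullet> xy_proj p"
proof (rule the_equality)
  let ?t = "height p - slope x \<bullet> xy_proj p"
  obtain w where w: "dxy x w = xy_proj p" using surj_dxy[OF x] by (metis surjD)
  have "D1 F x w = p - ?t *\<^sub>R xi"
    using w height_D1_eq[OF x, of w]
    by (intro xy_proj_height_eqI) (auto simp: dxy_def xy_proj_def height_def xi_def)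
  then show "p - ?t *\<^sub>R xi \<in> range (D1 F x)" by (metis rangeI)
next
  fix t assume "p - t *\<^sub>R xi \<in> range (D1 F x)"
  then obtain w where w: "D1 F x w = p - t *\<^sub>R xi" by auto
  then have "dxy x w = xy_proj p" "height (D1 F x w) = height p - t"
    by (auto simp: dxy_def xy_proj_def height_def xi_def)
  then show "t = height p - slope x \<bullet> xy_proj p" using height_D1_eq[OF x, of w] by simp
qed

lemma sff_eq_Dslope:
  "x \<in> V \<Longrightarrow> (THE t. D2 F x v w - t *\<^sub>R xi \<in> range (D1 F x)) = Dslope x v \<bullet> dxy x w"
  by (simp add: xi_component_eq height_D2_eq)

lemma xy_proj_F_open_map:
  assumes x: "x \<in> V"
  shows "xy_proj (F x) \<in> interior (xy_proj ` F ` V)"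
proof -
  obtain g where g: "linear g" "dxy x \<circ> g = id"
    using linear_surjective_right_inverse[OF linear_dxy[OF x] surj_dxy[OF x]] by blast
  have "continuous_on V (\<lambda>y. xy_proj (F y))"
    using has_derivative_continuous[OF has_derivative_xy_proj_F]
    by (simp add: continuous_at_imp_continuous_on)
  from sussmann_open_mapping[OF open_V this x has_derivative_xy_proj_F[OF x]
      linear_conv_bounded_linear[THEN iffD1, OF g(1)] g(2) subset_refl]
  show ?thesis
    using x open_V by (simp add: interior_open image_image)
qed

lemma paraboloid_coefficients_unique:
  assumes W: "open W" "x \<in> W" "W \<subseteq> V"
    and on_par: "F ` W \<subseteq> paraboloid k A B C" "F ` W \<subseteq> paraboloid k A' B' C'"
  shows "A = A' \<and> B = B' \<and> C = C'"
proof -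
  let ?a = "(A, B) - (A', B')"
  have zero: "?a \<bullet> xy_proj (F y) + (C - C') = 0" if "y \<in> W" for y
  proof -
    have "F y \<in> paraboloid k A B C" "F y \<in> paraboloid k A' B' C'" using on_par that by auto
    then have "(A, B) \<bullet> xy_proj (F y) + C = (A', B') \<bullet> xy_proj (F y) + C'"
      by (simp add: mem_paraboloid)
    then show ?thesis by (simp only: inner_diff_left)
  qed
  have xV: "x \<in> V" using W by blast
  have "((\<lambda>y. ?a \<bullet> xy_proj (F y) + (C - C')) has_derivative (\<lambda>h. ?a \<bullet> dxy x h)) (at x)"
    by (auto intro!: derivative_eq_intros has_derivative_xy_proj_F[OF xV])
  moreover have "((\<lambda>y. ?a \<bullet> xy_proj (F y) + (C - C')) has_derivative (\<lambda>h. 0)) (at x)"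
    by (rule has_derivative_transform_within_open[OF has_derivative_const[of 0] W(1,2)])
       (metis zero)
  ultimately have "?a \<bullet> dxy x h = 0" for h
    by (metis has_derivative_unique)
  moreover obtain h where "dxy x h = ?a" using surj_dxy[OF xV] by (metis surjD)
  ultimately have a0: "?a = 0" by (metis inner_eq_zero_iff)
  have "C = C'" using zero[OF W(2)] unfolding a0 by simp
  with a0 show ?thesis by (simp add: zero_prod_def)
qed

end

locale umbilical_patch = nondegenerate_patch +
  fixes L :: "real \<times> real \<Rightarrow> real"
  assumes smooth_L: "smooth_on_R2 V L"
    and umbilical: "\<And>x v w. x \<in> V \<Longrightarrow>
      (THE t. D2 F x v w - t *\<^sub>R xi \<in> range (D1 F x)) = L x * dform (D1 F x v) (D1 F x w)"
begin

lemma has_derivative_L: "x \<in> V \<Longrightarrow> (L has_derivative D1 L x) (at x)"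
  using smooth_on_R2_has_derivative[OF smooth_L open_V] .

lemma Dslope_eq:
  assumes x: "x \<in> V"
  shows "Dslope x v = L x *\<^sub>R dxy x v"
proof -
  let ?e = "Dslope x v - L x *\<^sub>R dxy x v"
  have "?e \<bullet> dxy x w = 0" for w
    using umbilical[OF x, of v w] sff_eq_Dslope[OF x, of v w]
    by (simp add: dform_eq_inner dxy_def inner_diff_left)
  moreover obtain w where "dxy x w = ?e" using surj_dxy[OF x] by (metis surjD)
  ultimately show ?thesis by (metis inner_eq_zero_iff right_minus_eq)
qed

lemma has_derivative_slope_umbilical:
  assumes x: "x \<in> V"
  shows "(slope has_derivative (\<lambda>v. L x *\<^sub>R dxy x v)) (at x)"
proof -
  have "Dslope x = (\<lambda>v. L x *\<^sub>R dxy x v)" using Dslope_eq[OF x] by blast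
  then show ?thesis using has_derivative_slope[OF x] by simp
qed

text \<open>The mixed second derivatives of \<open>slope\<close> agree; since \<open>dslope = L d(x, y)\<close> and
  \<open>d(x, y)\<close> is invertible, this forces \<open>dL = 0\<close>.\<close>
lemma derivative_L_zero:
  assumes x: "x \<in> V"
  shows "D1 L x u = 0"
proof -
  have sym: "D1 L x v *\<^sub>R dxy x w = D1 L x w *\<^sub>R dxy x v" for v w
  proof -
    have "D1 L x v *\<^sub>R dxy x w + L x *\<^sub>R xy_proj (D2 F x v w)
        = D1 L x w *\<^sub>R dxy x v + L x *\<^sub>R xy_proj (D2 F x w v)"
    proof (rule second_derivative_symmetric[OF open_V x, where g = slope
          and G = "\<lambda>y w. L y *\<^sub>R dxy y w"
          and H = "\<lambda>y v w. D1 L y v *\<^sub>R dxy y w + L y *\<^sub>R xy_proj (D2 F y v w)"])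
      show "\<And>y. y \<in> V \<Longrightarrow> (slope has_derivative (\<lambda>w. L y *\<^sub>R dxy y w)) (at y)"
        by (rule has_derivative_slope_umbilical)
      show "((\<lambda>y. L y *\<^sub>R dxy y w) has_derivative
          (\<lambda>v. D1 L y v *\<^sub>R dxy y w + L y *\<^sub>R xy_proj (D2 F y v w))) (at y)" if "y \<in> V" for y w
        using has_derivative_scaleR[OF has_derivative_L[OF that] has_derivative_dxy[OF that]]
        by (simp add: add.commute)
      have "isCont (\<lambda>y. D1 L y v) x" for v
        using smooth_on_R2_continuous[OF smooth_on_R2_D1[OF smooth_L] open_V x] .
      moreover have "isCont L x" using smooth_on_R2_continuous[OF smooth_L open_V x] .
      moreover have "isCont (\<lambda>y. dxy y w) x" for w
        using has_derivative_continuous[OF has_derivative_dxy[OF x]] .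
      ultimately show "isCont (\<lambda>y. D1 L y v *\<^sub>R dxy y w + L y *\<^sub>R xy_proj (D2 F y v w)) x" for v w
        using continuous_D2[OF x] by (auto simp: xy_proj_def intro!: continuous_intros)
    qed
    then show ?thesis using D2_symmetric[OF x, of v w] by simp
  qed
  obtain e1 e2 where e: "dxy x e1 = (1, 0)" "dxy x e2 = (0, 1)"
    using surj_dxy[OF x] by (metis surjD)
  have "D1 L x e1 = 0"
    using sym[of e2 e1] e by simp
  then show ?thesis
    using sym[of u e1] e by (simp add: zero_prod_def)
qed

lemma L_locally_constant:
  assumes x: "x \<in> V"
  obtains r where "r > 0" "ball x r \<subseteq> V" "\<And>y. y \<in> ball x r \<Longrightarrow> L y = L x"
proof -
  obtain r where r: "r > 0" "ball x r \<subseteq> V" using open_V x openE by blast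
  have "\<exists>c. \<forall>y\<in>ball x r. L y = c"
  proof (rule has_derivative_zero_constant[OF convex_ball])
    fix y assume "y \<in> ball x r"
    then have y: "y \<in> V" using r by blast
    have "D1 L y = (\<lambda>h. 0)" using derivative_L_zero[OF y] by blast
    then show "(L has_derivative (\<lambda>h. 0)) (at y within ball x r)"
      using has_derivative_L[OF y] by (simp add: has_derivative_at_withinI)
  qed
  then show ?thesis using that r by (metis centre_in_ball)
qed

lemma locally_on_paraboloid:
  assumes x: "x \<in> V"
  obtains r A B C where "r > 0" "ball x r \<subseteq> V" "F ` ball x r \<subseteq> paraboloid (L x) A B C"
proof -
  obtain r where r: "r > 0" "ball x r \<subseteq> V" and L_const: "\<And>y. y \<in> ball x r \<Longrightarrow> L y = L x"
    using L_locally_constant[OF x] by blast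
  define k where "k = L x"
  have yV: "y \<in> V" if "y \<in> ball x r" for y using r that by blast
  have "\<exists>c. \<forall>y\<in>ball x r. slope y - k *\<^sub>R xy_proj (F y) = c"
  proof (rule has_derivative_zero_constant[OF convex_ball])
    fix y assume y: "y \<in> ball x r"
    have "((\<lambda>y. slope y - k *\<^sub>R xy_proj (F y)) has_derivative
        (\<lambda>h. L y *\<^sub>R dxy y h - k *\<^sub>R dxy y h)) (at y)"
      by (intro has_derivative_diff has_derivative_scaleR_right has_derivative_slope_umbilical
          has_derivative_xy_proj_F yV[OF y])
    then show "((\<lambda>y. slope y - k *\<^sub>R xy_proj (F y)) has_derivative (\<lambda>h. 0)) (at y within ball x r)"
      using L_const[OF y] by (simp add: k_def has_derivative_at_withinI)
  qed
  then obtain c where c: "\<And>y. y \<in> ball x r \<Longrightarrow> slope y = c + k *\<^sub>R xy_proj (F y)"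
    by (metis diff_add_cancel add.commute)
  let ?\<phi> = "\<lambda>y. height (F y) - k / 2 * (xy_proj (F y) \<bullet> xy_proj (F y)) - c \<bullet> xy_proj (F y)"
  have "\<exists>C. \<forall>y\<in>ball x r. ?\<phi> y = C"
  proof (rule has_derivative_zero_constant[OF convex_ball])
    fix y assume y: "y \<in> ball x r"
    have "(?\<phi> has_derivative (\<lambda>h. height (D1 F y h)
        - k / 2 * (xy_proj (F y) \<bullet> dxy y h + dxy y h \<bullet> xy_proj (F y)) - c \<bullet> dxy y h)) (at y)"
      by (intro has_derivative_diff has_derivative_mult_right has_derivative_inner
          has_derivative_inner_right has_derivative_height_F has_derivative_xy_proj_F yV[OF y])
    moreover have "height (D1 F y h) - k / 2 * (xy_proj (F y) \<bullet> dxy y h + dxy y h \<bullet> xy_proj (F y))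
        - c \<bullet> dxy y h = 0" for h
      using height_D1_eq[OF yV[OF y], of h] c[OF y]
      by (simp add: inner_add_left inner_commute[of "dxy y h"])
    ultimately show "(?\<phi> has_derivative (\<lambda>h. 0)) (at y within ball x r)"
      by (simp add: has_derivative_at_withinI)
  qed
  then obtain C where C: "\<And>y. y \<in> ball x r \<Longrightarrow> ?\<phi> y = C" by blast
  have "F ` ball x r \<subseteq> paraboloid k (fst c) (snd c) C"
    using C by (auto simp: mem_paraboloid algebra_simps)
  with r show ?thesis using that k_def by blast
qed

end

lemma range_subset_if_locally_unique:
  fixes f :: "'a::topological_space \<Rightarrow> 'b" and S :: "'c \<Rightarrow> 'b set"
  assumes conn: "connected (UNIV :: 'a set)"
    and locally: "\<And>p. \<exists>t T. open T \<and> p \<in> T \<and> f ` T \<subseteq> S t"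
    and unique: "\<And>p t t' T. open T \<Longrightarrow> p \<in> T \<Longrightarrow> f ` T \<subseteq> S t \<Longrightarrow> f ` T \<subseteq> S t' \<Longrightarrow> t = t'"
  obtains t where "range f \<subseteq> S t"
proof -
  define good where "good p t \<longleftrightarrow> (\<exists>T. open T \<and> p \<in> T \<and> f ` T \<subseteq> S t)" for p t
  define label where "label p = (SOME t. good p t)" for p
  have good_label: "good p (label p)" for p
    using locally[of p] unfolding label_def good_def by (rule someI_ex)
  have "label constant_on UNIV"
  proof (rule locally_constant_imp_constant[OF conn])
    fix p
    obtain T where T: "open T" "p \<in> T" "f ` T \<subseteq> S (label p)"
      using good_label[of p] unfolding good_def by blast
    have "label m = label p" if "m \<in> T" for m
    proof -
      obtain T' where T': "open T'" "m \<in> T'" "f ` T' \<subseteq> S (label m)"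
        using good_label[of m] unfolding good_def by blast
      show ?thesis
        by (rule unique[of "T \<inter> T'" m]) (use T T' that in auto)
    qed
    moreover have "openin (top_of_set UNIV) T"
      using T(1) by (simp add: subtopology_UNIV open_openin[symmetric])
    ultimately show "\<exists>T. openin (top_of_set UNIV) T \<and> p \<in> T \<and> (\<forall>m\<in>T. label m = label p)"
      using T(2) by blast
  qed
  then obtain t where t: "\<And>p. label p = t" by (metis constant_on_def UNIV_I)
  have "f p \<in> S t" for p
    using good_label[of p] unfolding good_def t by blast
  then show thesis using that by blast
qed

lemma is_chart_inv_into:
  "is_chart c \<Longrightarrow> m \<in> fst c \<Longrightarrow> inv_into (fst c) (snd c) (snd c m) = m"
  by (simp add: is_chart_def Let_def inv_into_f_f)

lemma open_chart_preimage:
  assumes "is_chart c" "open B"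
  shows "open (fst c \<inter> snd c -` B)"
proof -
  have "open (fst c)" "continuous_on (fst c) (snd c)"
    using assms(1) unfolding is_chart_def Let_def by auto
  from continuous_on_open_vimage[OF this(1), THEN iffD1, OF this(2), rule_format, OF assms(2)]
  show ?thesis by (simp add: Int_commute)
qed

lemma open_chart_image:
  assumes c: "is_chart c" and S: "open S" "S \<subseteq> fst c"
  shows "open (snd c ` S)"
proof -
  have "snd c ` S = inv_into (fst c) (snd c) -` S \<inter> snd c ` fst c"
    using S(2) is_chart_inv_into[OF c] by (auto simp: image_iff)
  moreover have "open (snd c ` fst c)" "continuous_on (snd c ` fst c) (inv_into (fst c) (snd c))"
    using c unfolding is_chart_def Let_def by auto
  ultimately show ?thesis
    using continuous_on_open_vimage[THEN iffD1, rule_format, OF _ _ S(1)] by metis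
qed

section \<open>Umbilical immersions\<close>

locale umbilical_immersion =
  fixes \<A> :: "('m::topological_space set \<times> ('m \<Rightarrow> real \<times> real)) set"
    and f :: "'m \<Rightarrow> real \<times> real \<times> real"
    and lam :: "'m \<Rightarrow> real"
  assumes atlas: "smooth_atlas \<A>"
    and nondeg: "nondeg_immersion \<A> f"
    and lam_smooth: "smooth_map \<A> lam"
    and umbilic: "\<forall>c\<in>\<A>. \<forall>x\<in>snd c ` fst c. \<forall>v w.
                    sff c f x v w = lam (inv_into (fst c) (snd c) x) * ind_metric c f x v w"
begin

lemma is_chart_atlas: "c \<in> \<A> \<Longrightarrow> is_chart c"
  using atlas by (simp add: smooth_atlas_def)

lemma chart_at:
  obtains c where "c \<in> \<A>" "p \<in> fst c"
  using atlas unfolding smooth_atlas_def by blast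

lemma loc_at_chart: "c \<in> \<A> \<Longrightarrow> m \<in> fst c \<Longrightarrow> loc c g (snd c m) = g m"
  by (simp add: loc_def is_chart_inv_into[OF is_chart_atlas])

lemma umbilical_patch_chart:
  assumes c: "c \<in> \<A>"
  shows "umbilical_patch (snd c ` fst c) (loc c f) (loc c lam)"
proof
  show "open (snd c ` fst c)"
    using is_chart_atlas[OF c] by (simp add: is_chart_def Let_def)
  show "smooth_on_R2 (snd c ` fst c) (loc c f)"
    using nondeg c by (simp add: nondeg_immersion_def immersion_def smooth_map_def loc_def)
  show "smooth_on_R2 (snd c ` fst c) (loc c lam)"
    using lam_smooth c by (simp add: smooth_map_def loc_def)
  show "dform (D1 (loc c f) x v) (D1 (loc c f) x v) > 0" if "x \<in> snd c ` fst c" "v \<noteq> 0" for x v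
    using nondeg c that unfolding nondeg_immersion_def ind_metric_def by blast
  show "(THE t. D2 (loc c f) x v w - t *\<^sub>R xi \<in> range (D1 (loc c f) x))
      = loc c lam x * dform (D1 (loc c f) x v) (D1 (loc c f) x w)" if "x \<in> snd c ` fst c" for x v w
  proof -
    have "sff c f x v w = lam (inv_into (fst c) (snd c) x) * ind_metric c f x v w"
      using umbilic c that by blast
    then show ?thesis by (simp add: sff_def ind_metric_def loc_def)
  qed
qed

lemma lam_constant:
  assumes conn: "connected (UNIV :: 'm set)"
  obtains k where "\<And>p. lam p = k"
proof -
  have "\<exists>t T. open T \<and> p \<in> T \<and> lam ` T \<subseteq> {t}" for p
  proof -
    obtain c where c: "c \<in> \<A>" "p \<in> fst c" by (rule chart_at)
    interpret umbilical_patch "snd c ` fst c" "loc c f" "loc c lam"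
      by (rule umbilical_patch_chart[OF c(1)])
    obtain r where r: "r > 0"
      and const: "\<And>y. y \<in> ball (snd c p) r \<Longrightarrow> loc c lam y = loc c lam (snd c p)"
      using L_locally_constant[of "snd c p"] c(2) by blast
    let ?T = "fst c \<inter> snd c -` ball (snd c p) r"
    have "lam m = lam p" if "m \<in> ?T" for m
    proof -
      have "lam m = loc c lam (snd c m)" using that by (simp add: loc_at_chart[OF c(1)])
      also have "\<dots> = loc c lam (snd c p)" using const that by simp
      also have "\<dots> = lam p" using c by (simp add: loc_at_chart)
      finally show ?thesis .
    qed
    then have "lam ` ?T \<subseteq> {lam p}" by blast
    moreover have "open ?T" by (rule open_chart_preimage[OF is_chart_atlas[OF c(1)] open_ball])
    moreover have "p \<in> ?T" using c(2) r by simp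
    ultimately show ?thesis by blast
  qed
  then obtain k where "range lam \<subseteq> {k}"
    by (rule range_subset_if_locally_unique[OF conn]) blast
  then show thesis using that by blast
qed

lemma on_paraboloid_near:
  assumes k: "\<And>p. lam p = k"
  obtains T A B C where "open T" "p \<in> T" "f ` T \<subseteq> paraboloid k A B C"
proof -
  obtain c where c: "c \<in> \<A>" "p \<in> fst c" by (rule chart_at)
  interpret umbilical_patch "snd c ` fst c" "loc c f" "loc c lam"
    by (rule umbilical_patch_chart[OF c(1)])
  have x: "snd c p \<in> snd c ` fst c" using c(2) by blast
  obtain r A B C where r: "r > 0" "ball (snd c p) r \<subseteq> snd c ` fst c"
    and on_par: "loc c f ` ball (snd c p) r \<subseteq> paraboloid (loc c lam (snd c p)) A B C"
    by (rule locally_on_paraboloid[OF x])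
  have k': "loc c lam (snd c p) = k" using c k by (simp add: loc_at_chart)
  let ?T = "fst c \<inter> snd c -` ball (snd c p) r"
  have "f m \<in> paraboloid k A B C" if m: "m \<in> ?T" for m
  proof -
    have "loc c f (snd c m) \<in> paraboloid k A B C"
      using on_par m unfolding k' by blast
    then show ?thesis using m by (simp add: loc_at_chart[OF c(1)])
  qed
  moreover have "open ?T" by (rule open_chart_preimage[OF is_chart_atlas[OF c(1)] open_ball])
  moreover have "p \<in> ?T" using c(2) r by simp
  ultimately show thesis using that by blast
qed

lemma paraboloid_coefficients_determined:
  assumes T: "open T" "p \<in> T"
    and on_par: "f ` T \<subseteq> paraboloid k A B C" "f ` T \<subseteq> paraboloid k A' B' C'"
  shows "A = A' \<and> B = B' \<and> C = C'"
proof -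
  obtain c where c: "c \<in> \<A>" "p \<in> fst c" by (rule chart_at)
  interpret umbilical_patch "snd c ` fst c" "loc c f" "loc c lam"
    by (rule umbilical_patch_chart[OF c(1)])
  let ?W = "snd c ` (T \<inter> fst c)"
  have "open (fst c)" using is_chart_atlas[OF c(1)] by (simp add: is_chart_def Let_def)
  then have W: "open ?W"
    using open_chart_image[OF is_chart_atlas[OF c(1)]] open_Int[OF T(1)] by blast
  have "loc c f ` ?W = f ` (T \<inter> fst c)"
    unfolding image_image by (rule image_cong) (simp_all add: loc_at_chart[OF c(1)])
  then have "loc c f ` ?W \<subseteq> paraboloid k A B C" "loc c f ` ?W \<subseteq> paraboloid k A' B' C'"
    using on_par by auto
  moreover have "snd c p \<in> ?W" using T(2) c(2) by blast
  moreover have "?W \<subseteq> snd c ` fst c" by blast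
  ultimately show ?thesis
    by (rule paraboloid_coefficients_unique[OF W, rotated 2])
qed

lemma range_on_paraboloid:
  assumes conn: "connected (UNIV :: 'm set)" and k: "\<And>p. lam p = k"
  obtains A B C where "range f \<subseteq> paraboloid k A B C"
proof -
  let ?P = "\<lambda>(A, B, C). paraboloid k A B C"
  have "\<exists>t T. open T \<and> p \<in> T \<and> f ` T \<subseteq> ?P t" for p
  proof -
    obtain T A B C where "open T" "p \<in> T" "f ` T \<subseteq> paraboloid k A B C"
      by (rule on_paraboloid_near[OF k])
    then show ?thesis by (intro exI[of _ "(A, B, C)"] exI[of _ T]) simp
  qed
  moreover have "t = t'" if "open T" "p \<in> T" "f ` T \<subseteq> ?P t" "f ` T \<subseteq> ?P t'" for p t t' T
    using paraboloid_coefficients_determined[OF that(1,2)] that(3,4)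
    by (cases t, cases t') auto
  ultimately obtain t where t: "range f \<subseteq> ?P t"
    by (rule range_subset_if_locally_unique[OF conn])
  obtain A B C where "t = (A, B, C)" by (metis prod_cases3)
  then show thesis using that t by simp
qed

lemma open_xy_proj_range: "open (xy_proj ` range f)"
proof -
  have "xy_proj (f p) \<in> interior (xy_proj ` range f)" for p
  proof -
    obtain c where c: "c \<in> \<A>" "p \<in> fst c" by (rule chart_at)
    interpret umbilical_patch "snd c ` fst c" "loc c f" "loc c lam"
      by (rule umbilical_patch_chart[OF c(1)])
    have "loc c f ` snd c ` fst c = f ` fst c"
      unfolding image_image by (rule image_cong) (simp_all add: loc_at_chart[OF c(1)])
    then have "xy_proj ` loc c f ` snd c ` fst c \<subseteq> xy_proj ` range f" by auto
    moreover have "xy_proj (f p) \<in> interior (xy_proj ` loc c f ` snd c ` fst c)"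
      using xy_proj_F_open_map[of "snd c p"] c by (simp add: loc_at_chart)
    ultimately show ?thesis using interior_mono by blast
  qed
  then have "xy_proj ` range f \<subseteq> interior (xy_proj ` range f)" by auto
  then show ?thesis by (metis interior_eq interior_subset subset_antisym)
qed

end

theorem mainTheorem2:
  fixes \<A> :: "('m::{t2_space, second_countable_topology} set \<times> ('m \<Rightarrow> real \<times> real)) set"
    and f :: "'m \<Rightarrow> real \<times> real \<times> real"
    and lam :: "'m \<Rightarrow> real"
  assumes atlas: "smooth_atlas \<A>"
    and conn: "connected (UNIV :: 'm set)"
    and nondeg: "nondeg_immersion \<A> f"
    and lam_smooth: "smooth_map \<A> lam"
    and umbilic: "\<forall>c\<in>\<A>. \<forall>x\<in>snd c ` fst c. \<forall>v w.
                    sff c f x v w = lam (inv_into (fst c) (snd c) x) * ind_metric c f x v w"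
    and not_tg: "\<exists>c\<in>\<A>. \<exists>x\<in>snd c ` fst c. \<exists>v w. sff c f x v w \<noteq> 0"
  shows "\<exists>k. k \<noteq> 0 \<and> (\<forall>p. lam p = k) \<and>
           (\<exists>A B C. range f \<subseteq> {(u, v, k / 2 * (u\<^sup>2 + v\<^sup>2) + A * u + B * v + C) | u v. True} \<and>
              openin (top_of_set {(u, v, k / 2 * (u\<^sup>2 + v\<^sup>2) + A * u + B * v + C) | u v. True}) (range f)) \<and>
           (\<exists>\<Phi>. affine_isometry \<Phi> \<and>
              \<Phi> ` range f \<subseteq> {(u, v, u\<^sup>2 + v\<^sup>2) | u v. True} \<and>
              openin (top_of_set {(u, v, u\<^sup>2 + v\<^sup>2) | u v. True}) (\<Phi> ` range f))"
proof -
  interpret umbilical_immersion \<A> f lam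
    using atlas nondeg lam_smooth umbilic by unfold_locales
  obtain k where k: "\<And>p. lam p = k" using lam_constant[OF conn] by blast
  have k0: "k \<noteq> 0"
    using not_tg umbilic by (auto simp: k)
  obtain A B C where on_par: "range f \<subseteq> paraboloid k A B C"
    by (rule range_on_paraboloid[OF conn k])
  obtain \<Phi> where \<Phi>: "affine_isometry \<Phi>" "\<Phi> ` range f \<subseteq> paraboloid 2 0 0 0"
      "open (xy_proj ` \<Phi> ` range f)"
    by (rule paraboloid_normal_form[OF k0 on_par open_xy_proj_range])
  have "paraboloid 2 0 0 0 = {(u, v, u\<^sup>2 + v\<^sup>2) | u v. True}"
    by (simp add: paraboloid_def)
  then show ?thesis
    using k k0 on_par \<Phi>(1,2) openin_paraboloid_if_open_xy_proj[OF on_par open_xy_proj_range]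
      openin_paraboloid_if_open_xy_proj[OF \<Phi>(2,3)]
    unfolding paraboloid_def by auto
qed

end
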